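(* Let $n\ge2$, let $a_0,\dots,a_n$ be indeterminates and $P=\sum_{i=0}^na_ix^i$. For each $\boldsymbol\mu=(\mu_1,\dots,\mu_m)\in\mathcal M(n)$ with conjugate $\bar{\boldsymbol\mu}$, define $\tilde G_0=P$, $\tilde G_i=R_{\bar\mu_i}(\tilde G_{i-1},\tilde G_{i-1}')$ for $i\ge1$, regarded as polynomials in $x$ of formal degree $s_i=\sum_{k=i+1}^{\mu_1}\bar\mu_k$, and let $\mathcal S_{\boldsymbol\mu}$ be the set of polynomials in $a_0,\dots,a_n$ consisting of $D_j(\tilde G_i)$ for $0\le i\le\mu_1-2$ and $\bar\mu_{i+1}+1\le j\le s_i$; $D_{s_{\mu_1-1}}(\tilde G_{\mu_1-1})$; and $D_j(\tilde G_i)$ for $0\le i\le\mu_1-1$ and $1\le j\le\bar\mu_{i+1}$. Let $d_{\rm YHZ}$ be the maximum of the total degrees in $a_0,\dots,a_n$ of the polynomials in $\bigcup_{\boldsymbol\mu\in\mathcal M(n)}\mathcal S_{\boldsymbol\mu}$. Assume that for every $\boldsymbol\mu\in\mathcal M(n)$ and every $0\le i\le\mu_1-1$, the coefficient of $x^{s_i}$ in $\tilde G_i$ and the principal subresultant coefficient $\overline{R_{s_i}(\tilde G_i,\tilde G_i')}$ are not identically zero as polynomials in $a_0,\dots,a_n$. Then $d_{\rm YHZ}\ge 3^{\lfloor n/2\rfloor}$.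
   Context: $\mathcal M(n)$ is the set of nonincreasing tuples $(\mu_1,\dots,\mu_m)$ of positive integers with sum $n$; the conjugate is $\bar{\boldsymbol\mu}=(\bar\mu_1,\bar\mu_2,\dots)$ with $\bar\mu_i=\#\{j:\mu_j\ge i\}$. For two polynomials $F_0,F_1$ with $d_0=\deg F_0$ (formal degree), $d_1=\deg F_1$, and $0\le\delta_1\le d_0$: put $\delta_0=d_1+\delta_1-d_0$ if $\delta_1\ge1$ and $d_1+\delta_1\ge d_0$, else $\delta_0=1$; $\boldsymbol M$ is the $(\delta_0+\delta_1)\times(\delta_0+d_0)$ matrix with rows the coefficient vectors of $x^{\delta_0-1}F_0,\dots,F_0,x^{\delta_1-1}F_1,\dots,F_1$ w.r.t. $x^{\delta_0+d_0-1},\dots,1$; $R_{\delta_1}(F_0,F_1)=\operatorname{dp}\boldsymbol M$ where for a $p\times q$ matrix ($p\le q$) $\operatorname{dp}\boldsymbol M=\sum_{i=0}^{q-p}\det[\boldsymbol M_1,\dots,\boldsymbol M_{p-1},\boldsymbol M_{q-i}]x^i$; $\overline{R_{\delta_1}(F_0,F_1)}$ is its coefficient of $x^{d_0-\delta_1}$. Discriminant sequence: for $G=\sum_{i=0}^s b_ix^i$ (formal degree $s$), the discrimination matrix is the $2s\times2s$ matrix whose rows $2k-1$, $2k$ ($k=1,\dots,s$) are the coefficient vectors of $x^{s-k}G$ and $x^{s-k}G'$ w.r.t. $x^{2s-1},\dots,1$; $D_j(G)$ is its leading principal $2j\times2j$ minor. *)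

theory Defs
  imports "HOL-Library.Poly_Mapping" "HOL-Computational_Algebra.Polynomial"
    "Jordan_Normal_Form.Determinant"
begin

text \<open>Multivariate integer polynomials in the indeterminates a_0, a_1, ...:
  a monomial is an exponent vector (nat =>0 nat), a polynomial maps monomials to
  integer coefficients.\<close>
type_synonym mpoly = "(nat \<Rightarrow>\<^sub>0 nat) \<Rightarrow>\<^sub>0 int"

definition var_a :: "nat \<Rightarrow> mpoly" where
  "var_a i = Poly_Mapping.single (Poly_Mapping.single i 1) 1"

text \<open>Total degree (the zero polynomial gets degree 0).\<close>
definition total_degree :: "mpoly \<Rightarrow> nat" where
  "total_degree p = Max (insert 0 ((\<lambda>m. sum (Poly_Mapping.lookup m) (Poly_Mapping.keys m)) ` Poly_Mapping.keys p))"

definition genP :: "nat \<Rightarrow> mpoly poly" where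
  "genP n = (\<Sum>i\<le>n. monom (var_a i) i)"

definition Mset :: "nat \<Rightarrow> nat list set" where
  "Mset n = {mu. sorted_wrt (\<ge>) mu \<and> (\<forall>x\<in>set mu. 0 < x) \<and> sum_list mu = n}"

text \<open>Conjugate partition, 1-indexed: conj mu i = #{j. mu_j \<ge> i}.\<close>
definition conj :: "nat list \<Rightarrow> nat \<Rightarrow> nat" where
  "conj mu i = card {j. j < length mu \<and> mu ! j \<ge> i}"

text \<open>dp of a p x q matrix (p \<le> q): sum_{i=0}^{q-p} det[M_1..M_{p-1},M_{q-i}] x^i
  (columns 1-indexed in the paper; 0-indexed here).\<close>
definition dp :: "'a::comm_ring_1 mat \<Rightarrow> 'a poly" where
  "dp M = (let p = dim_row M; q = dim_col M in
     (\<Sum>i\<le>q - p. monom (det (mat p p (\<lambda>(r,c).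
        if c < p - 1 then M $$ (r,c) else M $$ (r, q - 1 - i)))) i))"

definition shcoeff :: "'a::zero poly \<Rightarrow> nat \<Rightarrow> nat \<Rightarrow> 'a" where
  "shcoeff F k e = (if k \<le> e then coeff F (e - k) else 0)"

definition delta0 :: "nat \<Rightarrow> nat \<Rightarrow> nat \<Rightarrow> nat" where
  "delta0 d0 d1 \<delta>1 = (if 1 \<le> \<delta>1 \<and> d0 \<le> d1 + \<delta>1 then d1 + \<delta>1 - d0 else 1)"

text \<open>Subresultant matrix: rows x^{\<delta>0-1}F0,...,F0,x^{\<delta>1-1}F1,...,F1 w.r.t.
  x^{\<delta>0+d0-1},...,1, where d0, d1 are the formal degrees.\<close>
definition subres_mat :: "nat \<Rightarrow> 'a::comm_ring_1 poly \<Rightarrow> nat \<Rightarrow> 'a poly \<Rightarrow> nat \<Rightarrow> 'a mat" where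
  "subres_mat \<delta>1 F0 d0 F1 d1 = (let \<delta>0 = delta0 d0 d1 \<delta>1; q = \<delta>0 + d0 in
     mat (\<delta>0 + \<delta>1) q (\<lambda>(r,c).
       if r < \<delta>0 then shcoeff F0 (\<delta>0 - 1 - r) (q - 1 - c)
       else shcoeff F1 (\<delta>1 - 1 - (r - \<delta>0)) (q - 1 - c)))"

definition subres :: "nat \<Rightarrow> 'a::comm_ring_1 poly \<Rightarrow> nat \<Rightarrow> 'a poly \<Rightarrow> nat \<Rightarrow> 'a poly" where
  "subres \<delta>1 F0 d0 F1 d1 = dp (subres_mat \<delta>1 F0 d0 F1 d1)"

definition psc :: "nat \<Rightarrow> 'a::comm_ring_1 poly \<Rightarrow> nat \<Rightarrow> 'a poly \<Rightarrow> nat \<Rightarrow> 'a" where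
  "psc \<delta>1 F0 d0 F1 d1 = coeff (subres \<delta>1 F0 d0 F1 d1) (d0 - \<delta>1)"

text \<open>Discrimination matrix of G of formal degree s (2s x 2s); rows 2k-1, 2k
  (1-indexed) are x^{s-k}G and x^{s-k}G' w.r.t. x^{2s-1},...,1.\<close>
definition discr_mat :: "'a::idom poly \<Rightarrow> nat \<Rightarrow> 'a mat" where
  "discr_mat G s = mat (2*s) (2*s) (\<lambda>(r,c).
     shcoeff (if even r then G else pderiv G) (s - (r div 2 + 1)) (2*s - 1 - c))"

definition Dj :: "nat \<Rightarrow> 'a::idom poly \<Rightarrow> nat \<Rightarrow> 'a" where
  "Dj j G s = det (mat (2*j) (2*j) (\<lambda>(r,c). discr_mat G s $$ (r,c)))"

definition sdeg :: "nat list \<Rightarrow> nat \<Rightarrow> nat" where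
  "sdeg mu i = (\<Sum>k\<in>{i+1..hd mu}. conj mu k)"

fun Gt :: "nat \<Rightarrow> nat list \<Rightarrow> nat \<Rightarrow> mpoly poly" where
  "Gt n mu 0 = genP n"
| "Gt n mu (Suc i) = subres (conj mu (Suc i)) (Gt n mu i) (sdeg mu i)
      (pderiv (Gt n mu i)) (sdeg mu i - 1)"

definition Sset :: "nat \<Rightarrow> nat list \<Rightarrow> mpoly set" where
  "Sset n mu =
     {Dj j (Gt n mu i) (sdeg mu i) | i j. i + 2 \<le> hd mu \<and> conj mu (i+1) + 1 \<le> j \<and> j \<le> sdeg mu i}
   \<union> {Dj (sdeg mu (hd mu - 1)) (Gt n mu (hd mu - 1)) (sdeg mu (hd mu - 1))}
   \<union> {Dj j (Gt n mu i) (sdeg mu i) | i j. i + 1 \<le> hd mu \<and> 1 \<le> j \<and> j \<le> conj mu (i+1)}"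

definition dYHZ :: "nat \<Rightarrow> nat" where
  "dYHZ n = Max (\<Union>mu\<in>Mset n. total_degree ` Sset n mu)"

end

theory Submission
  imports Defs
begin

text \<open>Every coefficient of \<open>G~_i\<close> is a homogeneous polynomial in \<open>a_0, \<dots>, a_n\<close>:
  \<open>R_\<delta>1(F, F')\<close> is a combination of \<open>(\<delta>0 + \<delta>1)\<close>-minors in the coefficients of \<open>F\<close>
  and \<open>F'\<close>, and since \<open>F'\<close> has formal degree one less than \<open>F\<close>, \<open>\<delta>0 = \<delta>1 - 1\<close>.
  So the coefficients of \<open>G~_i\<close> have degree \<open>\<Prod>k=1..i. (2 conj_k - 1)\<close>. If the largest part
  \<open>\<mu>_1\<close> occurs only once, then \<open>s_{\<mu>_1-1} = 1\<close> and \<open>D_1(G~_{\<mu>_1-1})\<close> is the square of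
  the nonzero leading coefficient, of degree twice that product. The partition \<open>(k+1, k)\<close> of
  \<open>2k+1\<close> gives \<open>2 \<cdot> 3^k\<close>, and \<open>(k, k-1, 1)\<close> of \<open>2k \<ge> 4\<close> gives \<open>10 \<cdot> 3^(k-2)\<close>.
  For \<open>n = 2\<close>, \<open>D_2(P)\<close> is \<open>-a_2\<close> times a principal subresultant coefficient, of degree 4.\<close>

section \<open>Homogeneous multivariate polynomials\<close>

definition monomial_degree :: "('v \<Rightarrow>\<^sub>0 nat) \<Rightarrow> nat" where
  "monomial_degree m = sum (Poly_Mapping.lookup m) (Poly_Mapping.keys m)"

definition homogeneous :: "nat \<Rightarrow> (('v \<Rightarrow>\<^sub>0 nat) \<Rightarrow>\<^sub>0 'b::zero) \<Rightarrow> bool" where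
  "homogeneous d p \<longleftrightarrow> (\<forall>m\<in>Poly_Mapping.keys p. monomial_degree m = d)"

lemma monomial_degree_eq_sum:
  assumes "finite S" "Poly_Mapping.keys m \<subseteq> S"
  shows "monomial_degree m = sum (Poly_Mapping.lookup m) S"
  unfolding monomial_degree_def
  by (rule sum.mono_neutral_left) (use assms in \<open>auto simp: in_keys_iff\<close>)

lemma monomial_degree_add: "monomial_degree (a + b) = monomial_degree a + monomial_degree b"
proof -
  let ?S = "Poly_Mapping.keys a \<union> Poly_Mapping.keys b"
  have "monomial_degree (a + b) = sum (Poly_Mapping.lookup (a + b)) ?S"
    by (rule monomial_degree_eq_sum) (use keys_add[of a b] in auto)
  also have "\<dots> = sum (Poly_Mapping.lookup a) ?S + sum (Poly_Mapping.lookup b) ?S"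
    by (simp add: lookup_add sum.distrib)
  also have "\<dots> = monomial_degree a + monomial_degree b"
    by (subst (1 2) monomial_degree_eq_sum[of ?S]) auto
  finally show ?thesis .
qed

lemma homogeneous_zero [simp]: "homogeneous d 0"
  by (simp add: homogeneous_def)

lemma homogeneous_add: "homogeneous d p \<Longrightarrow> homogeneous d q \<Longrightarrow> homogeneous d (p + q)"
  unfolding homogeneous_def using keys_add[of p q] by blast

lemma homogeneous_uminus: "homogeneous d p \<Longrightarrow> homogeneous d (- p)"
  by (simp add: homogeneous_def)

lemma homogeneous_mult:
  fixes p q :: "('v \<Rightarrow>\<^sub>0 nat) \<Rightarrow>\<^sub>0 'b::comm_semiring_0"
  shows "homogeneous a p \<Longrightarrow> homogeneous b q \<Longrightarrow> homogeneous (a + b) (p * q)"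
  unfolding homogeneous_def using keys_mult[of p q] by (force simp: monomial_degree_add)

lemma homogeneous_one: "homogeneous 0 (1 :: ('v \<Rightarrow>\<^sub>0 nat) \<Rightarrow>\<^sub>0 'b::zero_neq_one)"
  by (simp add: homogeneous_def monomial_degree_def)

lemma homogeneous_sum: "(\<And>i. i \<in> I \<Longrightarrow> homogeneous d (f i)) \<Longrightarrow> homogeneous d (sum f I)"
  by (induction I rule: infinite_finite_induct) (auto intro: homogeneous_add)

lemma homogeneous_prod:
  fixes f :: "'i \<Rightarrow> ('v \<Rightarrow>\<^sub>0 nat) \<Rightarrow>\<^sub>0 'b::comm_semiring_1"
  assumes "finite I" "\<And>i. i \<in> I \<Longrightarrow> homogeneous e (f i)"
  shows "homogeneous (card I * e) (prod f I)"
  using assms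
proof (induction I rule: finite_induct)
  case empty
  show ?case by (simp add: homogeneous_one)
next
  case (insert x F)
  then show ?case using homogeneous_mult[of e "f x" "card F * e" "prod f F"] by auto
qed

lemma homogeneous_of_nat: "homogeneous 0 (of_nat k :: ('v \<Rightarrow>\<^sub>0 nat) \<Rightarrow>\<^sub>0 'b::comm_semiring_1)"
  by (induction k) (auto intro: homogeneous_add homogeneous_one)

lemma homogeneous_of_int: "homogeneous 0 (of_int k :: ('v \<Rightarrow>\<^sub>0 nat) \<Rightarrow>\<^sub>0 'b::comm_ring_1)"
  by (cases k) (auto simp only: of_int_minus of_int_of_nat_eq intro: homogeneous_uminus homogeneous_of_nat)

lemma homogeneous_var_a: "homogeneous 1 (var_a i)"
  by (simp add: homogeneous_def var_a_def monomial_degree_def)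

lemma homogeneous_det:
  fixes A :: "(('v \<Rightarrow>\<^sub>0 nat) \<Rightarrow>\<^sub>0 'b::comm_ring_1) mat"
  assumes A: "A \<in> carrier_mat N N"
    and entries: "\<And>i j. i < N \<Longrightarrow> j < N \<Longrightarrow> homogeneous e (A $$ (i, j))"
  shows "homogeneous (N * e) (det A)"
proof -
  have "homogeneous (N * e) (signof p * (\<Prod>i = 0..<N. A $$ (i, p i)))" if "p permutes {0..<N}" for p
  proof -
    have "homogeneous (card {0..<N} * e) (\<Prod>i = 0..<N. A $$ (i, p i))"
      by (rule homogeneous_prod) (use entries permutes_in_image[OF that] in auto)
    then show ?thesis using homogeneous_mult[OF homogeneous_of_int] by fastforce
  qed
  then show ?thesis unfolding det_def'[OF A] by (intro homogeneous_sum) auto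
qed

lemma total_degree_homogeneous:
  assumes "homogeneous d p" "p \<noteq> 0"
  shows "total_degree p = d"
proof -
  have "Poly_Mapping.keys p \<noteq> {}"
    using assms(2) by simp
  then have "monomial_degree ` Poly_Mapping.keys p = {d}"
    using assms(1) unfolding homogeneous_def by (auto simp del: keys_eq_empty)
  then show ?thesis unfolding total_degree_def monomial_degree_def[abs_def] by simp
qed

definition coeffs_homogeneous :: "nat \<Rightarrow> (('v \<Rightarrow>\<^sub>0 nat) \<Rightarrow>\<^sub>0 'b::zero) poly \<Rightarrow> bool" where
  "coeffs_homogeneous e G \<longleftrightarrow> (\<forall>t. homogeneous e (coeff G t))"

lemma coeffs_homogeneous_pderiv:
  fixes G :: "(('v::linorder \<Rightarrow>\<^sub>0 nat) \<Rightarrow>\<^sub>0 'b::idom) poly"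
  shows "coeffs_homogeneous e G \<Longrightarrow> coeffs_homogeneous e (pderiv G)"
  unfolding coeffs_homogeneous_def coeff_pderiv
  using homogeneous_mult[OF homogeneous_of_nat] by (metis add_0)

lemma homogeneous_shcoeff: "coeffs_homogeneous e F \<Longrightarrow> homogeneous e (shcoeff F k t)"
  by (simp add: shcoeff_def coeffs_homogeneous_def)

lemma coeff_genP: "coeff (genP n) t = (if t \<le> n then var_a t else 0)"
  unfolding genP_def coeff_sum coeff_monom by (simp add: sum.delta')

lemma coeffs_homogeneous_genP: "coeffs_homogeneous 1 (genP n)"
  unfolding coeffs_homogeneous_def coeff_genP using homogeneous_var_a by simp

lemma degree_genP: "degree (genP n) \<le> n"
  by (rule degree_le) (simp add: coeff_genP)

lemma dim_subres_mat:
  "dim_row (subres_mat \<delta>1 F0 d0 F1 d1) = delta0 d0 d1 \<delta>1 + \<delta>1"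
  "dim_col (subres_mat \<delta>1 F0 d0 F1 d1) = delta0 d0 d1 \<delta>1 + d0"
  unfolding subres_mat_def Let_def by simp_all

lemma coeffs_homogeneous_subres:
  fixes F0 F1 :: "(('v \<Rightarrow>\<^sub>0 nat) \<Rightarrow>\<^sub>0 'b::comm_ring_1) poly"
  assumes h0: "coeffs_homogeneous e F0" and h1: "coeffs_homogeneous e F1" and le: "\<delta>1 \<le> d0"
  shows "coeffs_homogeneous ((delta0 d0 d1 \<delta>1 + \<delta>1) * e) (subres \<delta>1 F0 d0 F1 d1)"
proof -
  define M where "M = subres_mat \<delta>1 F0 d0 F1 d1"
  define p where "p = delta0 d0 d1 \<delta>1 + \<delta>1"
  define q where "q = delta0 d0 d1 \<delta>1 + d0"
  have dims: "dim_row M = p" "dim_col M = q"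
    unfolding M_def p_def q_def dim_subres_mat by auto
  have entries: "homogeneous e (M $$ (r, c))" if "r < p" "c < q" for r c
    using that unfolding M_def subres_mat_def Let_def p_def q_def
    by (simp add: homogeneous_shcoeff[OF h0] homogeneous_shcoeff[OF h1])
  have "homogeneous (p * e)
      (det (mat p p (\<lambda>(r, c). if c < p - 1 then M $$ (r, c) else M $$ (r, q - 1 - i))))" for i
    by (rule homogeneous_det) (use entries le in \<open>auto simp: p_def q_def\<close>)
  then show ?thesis
    unfolding coeffs_homogeneous_def subres_def dp_def Let_def dims coeff_sum coeff_monom
      M_def[symmetric] p_def[symmetric]
    by (auto intro!: homogeneous_sum)
qed

lemma coeff_dp_square:
  assumes N: "N \<in> carrier_mat p p"
  shows "coeff (dp N) 0 = det N"
proof -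
  have dims: "dim_row N = p" "dim_col N = p"
    using N by auto
  have last_col: "mat p p (\<lambda>(r, c). if c < p - 1 then N $$ (r, c) else N $$ (r, p - 1 - 0)) = N"
  proof (rule eq_matI)
    fix i j assume "i < dim_row N" "j < dim_col N"
    moreover have "\<not> j < p - 1 \<Longrightarrow> j < p \<Longrightarrow> j = p - 1" by linarith
    ultimately show "mat p p (\<lambda>(r, c). if c < p - 1 then N $$ (r, c) else N $$ (r, p - 1 - 0)) $$ (i, j) = N $$ (i, j)"
      using N by auto
  qed (use N in auto)
  show ?thesis
    unfolding dp_def Let_def dims
    by (simp only: diff_self_eq_0 atMost_0 sum.insert_if finite.emptyI empty_iff if_False sum.empty
        add_0_right coeff_monom if_True last_col) simp
qed

lemma degree_subres:
  assumes "\<delta>1 \<le> d0"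
  shows "degree (subres \<delta>1 F0 d0 F1 d1) \<le> d0 - \<delta>1"
proof -
  define M where "M = subres_mat \<delta>1 F0 d0 F1 d1"
  have "dim_col M - dim_row M = d0 - \<delta>1"
    unfolding M_def dim_subres_mat using assms by simp
  then show ?thesis
    unfolding subres_def dp_def Let_def M_def[symmetric]
    by (intro degree_le) (auto simp: coeff_sum coeff_monom)
qed

section \<open>Discriminant minors\<close>

lemma homogeneous_Dj:
  fixes G :: "(('v::linorder \<Rightarrow>\<^sub>0 nat) \<Rightarrow>\<^sub>0 'b::idom) poly"
  assumes "coeffs_homogeneous e G" "j \<le> s"
  shows "homogeneous (2 * j * e) (Dj j G s)"
  unfolding Dj_def
proof (rule homogeneous_det)
  fix r c assume "r < 2 * j" "c < 2 * j"
  then show "homogeneous e (mat (2 * j) (2 * j) (\<lambda>(r, c). discr_mat G s $$ (r, c)) $$ (r, c))"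
    using assms by (auto simp: discr_mat_def intro: homogeneous_shcoeff coeffs_homogeneous_pderiv)
qed simp

lemma det_2: "det (mat 2 2 f) = (f (0, 0) * f (1, 1) - f (0, 1) * f (1, 0) :: 'a::comm_ring_1)"
proof -
  have "det (mat 2 2 f) = (\<Sum>i<2. mat 2 2 f $$ (i, 0) * cofactor (mat 2 2 f) i 0)"
    by (rule laplace_expansion_column) auto
  then show ?thesis
    by (simp add: numeral_2_eq_2 cofactor_def det_single mat_delete_def)
qed

lemma Dj_1_eq:
  assumes s: "1 \<le> s" and deg: "degree G \<le> s"
  shows "Dj 1 G s = of_nat s * (coeff G s * coeff G s)"
proof -
  have entries:
    "discr_mat G s $$ (0, 0) = coeff G s" "discr_mat G s $$ (0, 1) = coeff G (s - 1)"
    "discr_mat G s $$ (1, 0) = coeff (pderiv G) s" "discr_mat G s $$ (1, 1) = coeff (pderiv G) (s - 1)"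
    using s by (simp_all add: discr_mat_def shcoeff_def numeral_2_eq_2)
  have "coeff G (Suc s) = 0"
    using deg by (simp add: coeff_eq_0)
  moreover have "Dj 1 G s = coeff G s * coeff (pderiv G) (s - 1) - coeff G (s - 1) * coeff (pderiv G) s"
    unfolding Dj_def mult_1_right det_2 prod.case entries ..
  ultimately show ?thesis
    using s by (simp add: coeff_pderiv algebra_simps)
qed

lemma total_degree_Dj_1:
  assumes "1 \<le> s" "degree G \<le> s" "coeffs_homogeneous e G" "coeff G s \<noteq> 0"
  shows "total_degree (Dj 1 G s) = 2 * e"
proof (rule total_degree_homogeneous)
  show "homogeneous (2 * e) (Dj 1 G s)"
    using homogeneous_Dj[of e G 1 s] assms by simp
  show "Dj 1 G s \<noteq> 0"
    unfolding Dj_1_eq[OF assms(1,2)] using assms by simp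
qed

lemma Dj_2_eq_psc:
  fixes G :: "'a::idom poly"
  assumes deg: "degree G \<le> 2"
  shows "Dj 2 G 2 = - (coeff G 2 * psc 2 G 2 (pderiv G) 1)"
proof -
  define A where "A = mat 4 4 (\<lambda>(r, c). discr_mat G 2 $$ (r, c))"
  define N where "N = subres_mat 2 G 2 (pderiv G) 1"
  have high: "coeff G 3 = 0" "coeff G 4 = 0"
    using deg by (simp_all add: coeff_eq_0)
  have A_entry: "A $$ (r, c) = shcoeff (if even r then G else pderiv G) (2 - (r div 2 + 1)) (3 - c)"
    if "r < 4" "c < 4" for r c
    using that unfolding A_def discr_mat_def by simp
  have A: "A \<in> carrier_mat 4 4" unfolding A_def by simp
  have N: "N \<in> carrier_mat 3 3"
    unfolding carrier_mat_def N_def by (simp add: dim_subres_mat delta0_def)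
  have N_entry: "N $$ (r, c) = (if r < 1 then shcoeff G 0 (2 - c) else shcoeff (pderiv G) (2 - r) (2 - c))"
    if "r < 3" "c < 3" for r c
    using that unfolding N_def subres_mat_def Let_def by (simp add: delta0_def numeral_2_eq_2)
  have below_3: "i < 3 \<Longrightarrow> i = 0 \<or> i = 1 \<or> i = 2" for i :: nat by auto
  have "det A = (\<Sum>i<4. A $$ (i, 0) * cofactor A i 0)"
    by (rule laplace_expansion_column[OF A]) simp
  also have "\<dots> = A $$ (0, 0) * cofactor A 0 0"
    using high by (simp add: lessThan_nat_numeral A_entry shcoeff_def coeff_pderiv)
  finally have expand: "det A = coeff G 2 * det (mat_delete A 0 0)"
    by (simp add: A_entry shcoeff_def cofactor_def)
  \<comment> \<open>Deleting the leading row and column of the discrimination matrix leaves the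
    subresultant matrix with its first two rows swapped.\<close>
  have "mat_delete A 0 0 = swaprows 0 1 N"
  proof (rule eq_matI)
    fix i j assume "i < dim_row (swaprows 0 1 N)" "j < dim_col (swaprows 0 1 N)"
    then have i: "i < 3" and j: "j < 3" using N by auto
    then have "mat_delete A 0 0 $$ (i, j) = A $$ (Suc i, Suc j)"
      using A unfolding mat_delete_def by simp
    then show "mat_delete A 0 0 $$ (i, j) = swaprows 0 1 N $$ (i, j)"
      using below_3[OF i] below_3[OF j] N i j by (auto simp: A_entry N_entry)
  qed (use A N in auto)
  then have swap: "det (mat_delete A 0 0) = - det N"
    using det_swaprows[OF _ _ _ N, of 0 1] by simp
  have "psc 2 G 2 (pderiv G) 1 = det N"
    using coeff_dp_square[OF N] unfolding psc_def subres_def N_def by simp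
  moreover have "Dj 2 G 2 = det A"
    unfolding Dj_def A_def by simp
  ultimately show ?thesis
    using expand swap by simp
qed

section \<open>Partitions and the weights of the iterated subresultants\<close>

lemma conj_eq_length_filter: "conj mu i = length (filter (\<lambda>x. i \<le> x) mu)"
  unfolding conj_def length_filter_conv_card by simp

lemma conj_pos: "mu \<noteq> [] \<Longrightarrow> k \<le> hd mu \<Longrightarrow> 1 \<le> conj mu k"
  by (cases mu) (simp_all add: conj_eq_length_filter)

lemma sum_count_ge_eq_sum_list:
  "\<forall>x\<in>set xs. x \<le> h \<Longrightarrow> (\<Sum>k=1..h. length (filter (\<lambda>x. k \<le> x) xs)) = sum_list xs"
proof (induction xs)
  case (Cons x xs)
  have "(\<Sum>k=1..h. if k \<le> x then 1 else 0 :: nat) = (\<Sum>k=1..x. 1)"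
    by (rule sum.mono_neutral_cong_right) (use Cons.prems in auto)
  moreover have "length (filter (\<lambda>y. k \<le> y) (x # xs))
      = (if k \<le> x then 1 else 0) + length (filter (\<lambda>y. k \<le> y) xs)" for k
    by simp
  ultimately show ?case
    using Cons by (simp only: sum.distrib) simp
qed simp

lemma sdeg_Suc: "Suc i \<le> hd mu \<Longrightarrow> sdeg mu i = conj mu (Suc i) + sdeg mu (Suc i)"
  unfolding sdeg_def by (simp add: sum.atLeast_Suc_atMost)

lemma sdeg_pred_hd: "1 \<le> hd mu \<Longrightarrow> sdeg mu (hd mu - 1) = conj mu (hd mu)"
  unfolding sdeg_def by simp

lemma sdeg_0_Mset: "mu \<in> Mset n \<Longrightarrow> sdeg mu 0 = n"
proof (cases mu)
  case (Cons x xs)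
  assume "mu \<in> Mset n"
  then have "\<forall>y\<in>set mu. y \<le> hd mu" and "sum_list mu = n"
    using Cons by (auto simp: Mset_def)
  then show ?thesis
    unfolding sdeg_def conj_eq_length_filter using sum_count_ge_eq_sum_list[of mu "hd mu"] by simp
qed (simp add: sdeg_def conj_def Mset_def)

lemma hd_Mset_pos: "mu \<in> Mset n \<Longrightarrow> 1 \<le> n \<Longrightarrow> 1 \<le> hd mu"
  by (cases mu) (auto simp: Mset_def)

definition Gt_weight :: "nat list \<Rightarrow> nat \<Rightarrow> nat" where
  "Gt_weight mu i = (\<Prod>k=1..i. 2 * conj mu k - 1)"

lemma coeffs_homogeneous_Gt:
  "mu \<noteq> [] \<Longrightarrow> i \<le> hd mu \<Longrightarrow> coeffs_homogeneous (Gt_weight mu i) (Gt n mu i)"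
proof (induction i)
  case 0
  show ?case using coeffs_homogeneous_genP by (simp add: Gt_weight_def)
next
  case (Suc i)
  let ?c = "conj mu (Suc i)"
  have IH: "coeffs_homogeneous (Gt_weight mu i) (Gt n mu i)"
    using Suc by simp
  have c: "1 \<le> ?c" "?c \<le> sdeg mu i"
    using conj_pos[OF Suc.prems] sdeg_Suc[OF Suc.prems(2)] by auto
  have "Gt_weight mu (Suc i) = (2 * ?c - 1) * Gt_weight mu i"
    unfolding Gt_weight_def by simp
  also have "2 * ?c - 1 = delta0 (sdeg mu i) (sdeg mu i - 1) ?c + ?c"
    using c by (auto simp: delta0_def)
  finally have "Gt_weight mu (Suc i) = (delta0 (sdeg mu i) (sdeg mu i - 1) ?c + ?c) * Gt_weight mu i" .
  then show ?case
    using coeffs_homogeneous_subres[OF IH coeffs_homogeneous_pderiv[OF IH] c(2)] by simp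
qed

lemma degree_Gt: "mu \<in> Mset n \<Longrightarrow> i \<le> hd mu \<Longrightarrow> degree (Gt n mu i) \<le> sdeg mu i"
proof (induction i)
  case 0
  then show ?case using degree_genP[of n] sdeg_0_Mset by simp
next
  case (Suc i)
  have "conj mu (Suc i) \<le> sdeg mu i"
    using sdeg_Suc[OF Suc.prems(2)] by simp
  then show ?case
    using degree_subres[of "conj mu (Suc i)" "sdeg mu i"] sdeg_Suc[OF Suc.prems(2)] by simp
qed

lemma finite_Mset: "finite (Mset n)"
proof (rule finite_subset)
  show "Mset n \<subseteq> {xs. set xs \<subseteq> {..n} \<and> length xs \<le> n}"
  proof
    fix xs assume "xs \<in> Mset n"
    then have pos: "\<forall>x\<in>set xs. 0 < x" and sum: "sum_list xs = n"
      by (auto simp: Mset_def)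
    have "length xs \<le> sum_list xs"
      using pos by (induction xs) auto
    then show "xs \<in> {xs. set xs \<subseteq> {..n} \<and> length xs \<le> n}"
      using sum member_le_sum_list by fastforce
  qed
qed (rule finite_lists_length_le, simp)

lemma finite_Sset: "finite (Sset n mu)"
proof -
  let ?D = "\<lambda>(i, j). Dj j (Gt n mu i) (sdeg mu i)"
  have "{Dj j (Gt n mu i) (sdeg mu i) | i j. i + 2 \<le> hd mu \<and> conj mu (i+1) + 1 \<le> j \<and> j \<le> sdeg mu i}
      \<subseteq> ?D ` (SIGMA i:{..hd mu}. {..sdeg mu i})"
   and "{Dj j (Gt n mu i) (sdeg mu i) | i j. i + 1 \<le> hd mu \<and> 1 \<le> j \<and> j \<le> conj mu (i+1)}
      \<subseteq> ?D ` (SIGMA i:{..hd mu}. {..conj mu (i+1)})"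
    by force+
  then show ?thesis
    unfolding Sset_def by (auto elim!: finite_subset)
qed

lemma total_degree_le_dYHZ: "mu \<in> Mset n \<Longrightarrow> X \<in> Sset n mu \<Longrightarrow> total_degree X \<le> dYHZ n"
  unfolding dYHZ_def by (rule Max_ge) (use finite_Mset finite_Sset in auto)

lemma dYHZ_lower_bound_unique_largest_part:
  assumes mu: "mu \<in> Mset n" and unique: "conj mu (hd mu) = 1"
    and lc: "coeff (Gt n mu (hd mu - 1)) (sdeg mu (hd mu - 1)) \<noteq> 0"
  shows "2 * Gt_weight mu (hd mu - 1) \<le> dYHZ n"
proof -
  define i where "i = hd mu - 1"
  have "mu \<noteq> []"
    using unique by (auto simp: conj_def)
  then have hd: "1 \<le> hd mu"
    using mu by (cases mu) (auto simp: Mset_def)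
  then have s: "sdeg mu i = 1" and i: "i + 1 = hd mu"
    using unique sdeg_pred_hd unfolding i_def by auto
  have "Dj 1 (Gt n mu i) (sdeg mu i) \<in> Sset n mu"
    using i unique unfolding Sset_def by force
  moreover have "total_degree (Dj 1 (Gt n mu i) (sdeg mu i)) = 2 * Gt_weight mu i"
    using \<open>mu \<noteq> []\<close> mu lc i s
    by (intro total_degree_Dj_1 degree_Gt coeffs_homogeneous_Gt) (auto simp: i_def)
  ultimately show ?thesis
    using total_degree_le_dYHZ[OF mu] unfolding i_def by metis
qed

lemma dYHZ_lower_bound_odd:
  assumes n: "odd n" "3 \<le> n"
    and lc: "\<forall>mu\<in>Mset n. coeff (Gt n mu (hd mu - 1)) (sdeg mu (hd mu - 1)) \<noteq> 0"
  shows "3 ^ (n div 2) \<le> dYHZ n"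
proof -
  define k where "k = n div 2"
  have nk: "n = 2 * k + 1" and k: "1 \<le> k"
    using n unfolding k_def by auto
  define mu where "mu = [k + 1, k]"
  have mu: "mu \<in> Mset n"
    unfolding mu_def Mset_def using nk k by auto
  have hd: "hd mu = k + 1"
    unfolding mu_def by simp
  have conj_mu: "conj mu i = (if i \<le> k + 1 then 1 else 0) + (if i \<le> k then 1 else 0)" for i
    unfolding conj_eq_length_filter mu_def by simp
  have "Gt_weight mu (hd mu - 1) = (\<Prod>i=1..k. 3)"
    unfolding Gt_weight_def hd by (intro prod.cong) (auto simp: conj_mu)
  moreover have "2 * Gt_weight mu (hd mu - 1) \<le> dYHZ n"
    by (rule dYHZ_lower_bound_unique_largest_part[OF mu _ lc[rule_format, OF mu]])
      (simp add: conj_mu hd)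
  ultimately have "2 * 3 ^ k \<le> dYHZ n"
    by simp
  then show ?thesis
    unfolding k_def by simp
qed

lemma dYHZ_lower_bound_even:
  assumes n: "even n" "4 \<le> n"
    and lc: "\<forall>mu\<in>Mset n. coeff (Gt n mu (hd mu - 1)) (sdeg mu (hd mu - 1)) \<noteq> 0"
  shows "3 ^ (n div 2) \<le> dYHZ n"
proof -
  define k where "k = n div 2"
  have nk: "n = 2 * k" and k: "2 \<le> k"
    using n unfolding k_def by auto
  define mu where "mu = [k, k - 1, 1]"
  have mu: "mu \<in> Mset n"
    unfolding mu_def Mset_def using nk k by auto
  have hd: "hd mu = k"
    unfolding mu_def by simp
  have conj_mu: "conj mu i =
      (if i \<le> k then 1 else 0) + (if i \<le> k - 1 then 1 else 0) + (if i \<le> 1 then 1 else 0)" for i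
    unfolding conj_eq_length_filter mu_def by auto
  have "Gt_weight mu (hd mu - 1) = (2 * conj mu 1 - 1) * (\<Prod>i=Suc 1..k-1. 2 * conj mu i - 1)"
    unfolding Gt_weight_def hd using k by (intro prod.atLeast_Suc_atMost) simp
  moreover have "(\<Prod>i=Suc 1..k-1. 2 * conj mu i - 1) = (\<Prod>i=Suc 1..k-1. 3)"
    by (rule prod.cong) (auto simp: conj_mu)
  moreover have "conj mu 1 = 3"
    using k by (simp add: conj_mu)
  ultimately have "Gt_weight mu (hd mu - 1) = 5 * 3 ^ (k - 2)"
    by simp
  moreover have "2 * Gt_weight mu (hd mu - 1) \<le> dYHZ n"
    by (rule dYHZ_lower_bound_unique_largest_part[OF mu _ lc[rule_format, OF mu]])
      (use k in \<open>simp add: conj_mu hd\<close>)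
  ultimately have "2 * (5 * 3 ^ (k - 2)) \<le> dYHZ n"
    by simp
  moreover have "(3::nat) ^ k = 3 ^ (2 + (k - 2))"
    by (simp only: le_add_diff_inverse[OF k])
  ultimately show ?thesis
    unfolding k_def[symmetric] by (simp add: power_add)
qed

lemma dYHZ_lower_bound_2:
  assumes "coeff (genP 2) 2 \<noteq> 0" "psc 2 (genP 2) 2 (pderiv (genP 2)) 1 \<noteq> 0"
  shows "3 \<le> dYHZ 2"
proof -
  define mu where "mu = [1, 1 :: nat]"
  have mu: "mu \<in> Mset 2"
    unfolding mu_def Mset_def by auto
  have "sdeg mu 0 = 2"
    using sdeg_0_Mset[OF mu] .
  then have "Dj 2 (genP 2) 2 \<in> Sset 2 mu"
    unfolding Sset_def mu_def by simp
  moreover have "total_degree (Dj 2 (genP 2) 2) = 4"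
  proof (rule total_degree_homogeneous)
    show "homogeneous 4 (Dj 2 (genP 2) 2)"
      using homogeneous_Dj[OF coeffs_homogeneous_genP, of 2 2] by simp
    show "Dj 2 (genP 2) 2 \<noteq> 0"
      using assms degree_genP by (simp add: Dj_2_eq_psc)
  qed
  ultimately show ?thesis
    using total_degree_le_dYHZ[OF mu] by fastforce
qed

theorem mainTheorem6:
  fixes n :: nat
  assumes "n \<ge> 2"
    and "\<forall>mu\<in>Mset n. \<forall>i. i + 1 \<le> hd mu \<longrightarrow>
           coeff (Gt n mu i) (sdeg mu i) \<noteq> 0 \<and>
           psc (sdeg mu i) (Gt n mu i) (sdeg mu i) (pderiv (Gt n mu i)) (sdeg mu i - 1) \<noteq> 0"
  shows "dYHZ n \<ge> 3 ^ (n div 2)"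
proof -
  have lc: "\<forall>mu\<in>Mset n. coeff (Gt n mu (hd mu - 1)) (sdeg mu (hd mu - 1)) \<noteq> 0"
    using assms hd_Mset_pos by fastforce
  have "n = 2 \<or> odd n \<and> 3 \<le> n \<or> even n \<and> 4 \<le> n"
    using assms(1) by presburger
  then consider "n = 2" | "odd n" "3 \<le> n" | "even n" "4 \<le> n"
    by blast
  then show ?thesis
  proof cases
    case 1
    have mu: "[1, 1] \<in> Mset 2"
      by (simp add: Mset_def)
    have "3 \<le> dYHZ 2"
      using bspec[OF assms(2)[unfolded 1] mu, rule_format, of 0] sdeg_0_Mset[OF mu]
      by (intro dYHZ_lower_bound_2) simp_all
    then show ?thesis using 1 by simp
  qed (use dYHZ_lower_bound_odd dYHZ_lower_bound_even lc in auto)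
qed

end
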